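(* Let $E$ be a countable set, $\sigma$ a random virtual permutation of $E$ with central law, $(\lambda_k)_{k\ge1}$ its sequence of asymptotic cycle lengths, and $C = L \cup \bigcup_k C_k$ the random space built from $(\lambda_k)$ as in the context. Define the random metric $D$ on $C$ by: $D(x,y) = \inf\{|a| : x - y \equiv a \pmod{\lambda_k}\}$ if $x, y \in C_k$ for the same $k$; $D(x,y) = 0$ if $x = y \in L$; $D(x,y) = 1$ otherwise. Suppose the probability space supports random variables $(X_x)_{x \in E}$ in $C$ which, conditionally on $(\lambda_k)$, are i.i.d. uniform on $C$, and such that almost surely: $X_x \in L$ iff $x$ is a fixed point of $\sigma$; for distinct $x,y$, $x \sim_\sigma y$ iff $X_x,X_y$ lie on the same circle $C_k$, in which case $\lambda(x)=\lambda(y)=\lambda_k$; and for distinct $x \sim_\sigma y$, $\delta(x,y) = X_y - X_x$ modulo $\lambda(x)$. Let $K := \{X_x : x \in E\}$. Then the map $x \mapsto X_x$ is almost surely a bijective isometry from $(E,d)$ onto $(K,D)$.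
   Context: A virtual permutation of $E$ is a family $\sigma=(\sigma_I)$ indexed by finite $I\subset E$, $\sigma_I$ a permutation of $I$, with $\sigma_I(x)=\sigma_J^m(x)$ ($m\ge1$ minimal with $\sigma_J^m(x)\in I$) for $I\subset J$; the space carries the $\sigma$-algebra generated by $\sigma\mapsto\sigma_J$. $x\sim_\sigma y$ iff $x,y$ lie in a common cycle of $\sigma_I$ for some (equivalently every) finite $I\ni x,y$; $\mathcal{C}_\sigma(x)$ is its class; $x$ is a fixed point if $\sigma_I(x)=x$ for all finite $I\ni x$. A law is central if each $\sigma_I$ has conjugation-invariant law. Under a central law: $\lambda(x)$ is the $L^1$ limit as $|I|\to\infty$ of $|I\cap\mathcal{C}_\sigma(x)|/|I|$; $\lambda_k$ is the supremum of $\min_{j\le k}\lambda(x_j)$ over pairwise non-equivalent $x_1,\dots,x_k$ (a.s. non-increasing with sum $\le1$); for $x\sim_\sigma y$, $k_I(x,y)\in\{0,\dots,|I\cap\mathcal{C}_\sigma(x)|-1\}$ satisfies $\sigma_I^{k_I(x,y)}(x)=y$, $\Delta(x,y)$ is the $L^1$ limit of $k_I(x,y)/|I|$, $\delta(x,y)$ its class mod $\lambda(x)$. The metric $d$ on $E$: $d(x,y)=1$ if $x\not\sim_\sigma y$, and $d(x,y)=\inf\{|a|: a\equiv\delta(x,y) \bmod \lambda(x)\}$ if $x\sim_\sigma y$. The space $C$: for each $k$ with $\lambda_k>0$ a circle $C_k$ of perimeter $\lambda_k$, pairwise disjoint, with $y-x\in\mathbb{R}/\lambda_k\mathbb{Z}$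 the counterclockwise arc length from $x$ to $y$; $L$ a disjoint segment of length $1-\sum_k\lambda_k$ (empty if $0$); uniform on $C$ means the probability measure giving arcs and subsegments their length. *)

theory Defs
  imports "HOL-Probability.Probability" "HOL-Combinatorics.Permutations"
begin

text \<open>A virtual permutation of E is represented as a function s mapping each finite
  subset I of E to a permutation s I of I (identity outside I).\<close>

definition virtual_perm :: "'e set \<Rightarrow> ('e set \<Rightarrow> 'e \<Rightarrow> 'e) \<Rightarrow> bool" where
  "virtual_perm E s \<longleftrightarrow>
     (\<forall>I. finite I \<and> I \<subseteq> E \<longrightarrow> s I permutes I) \<and>
     (\<forall>I J x. finite J \<and> J \<subseteq> E \<and> I \<subseteq> J \<and> x \<in> I \<longrightarrow>
        s I x = (s J ^^ (LEAST m. 1 \<le> m \<and> (s J ^^ m) x \<in> I)) x)"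

definition vequiv :: "'e set \<Rightarrow> ('e set \<Rightarrow> 'e \<Rightarrow> 'e) \<Rightarrow> 'e \<Rightarrow> 'e \<Rightarrow> bool" where
  "vequiv E s x y \<longleftrightarrow>
     (\<exists>I. finite I \<and> I \<subseteq> E \<and> x \<in> I \<and> y \<in> I \<and> (\<exists>n. (s I ^^ n) x = y))"

definition vclass :: "'e set \<Rightarrow> ('e set \<Rightarrow> 'e \<Rightarrow> 'e) \<Rightarrow> 'e \<Rightarrow> 'e set" where
  "vclass E s x = {y. vequiv E s x y}"

definition vfixed :: "'e set \<Rightarrow> ('e set \<Rightarrow> 'e \<Rightarrow> 'e) \<Rightarrow> 'e \<Rightarrow> bool" where
  "vfixed E s x \<longleftrightarrow> (\<forall>I. finite I \<and> I \<subseteq> E \<and> x \<in> I \<longrightarrow> s I x = x)"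

definition kI :: "'e set \<Rightarrow> ('e set \<Rightarrow> 'e \<Rightarrow> 'e) \<Rightarrow> 'e set \<Rightarrow> 'e \<Rightarrow> 'e \<Rightarrow> nat" where
  "kI E s I x y = (THE k. k < card (I \<inter> vclass E s x) \<and> (s I ^^ k) x = y)"

text \<open>The filter "|I| tends to infinity" over finite subsets I of E containing S.\<close>
definition finsets_top :: "'e set \<Rightarrow> 'e set \<Rightarrow> 'e set filter" where
  "finsets_top E S = (INF N. principal {I. finite I \<and> S \<subseteq> I \<and> I \<subseteq> E \<and> N \<le> card I})"

text \<open>lamseq E s l k is the paper's lambda_(k+1) (0-based index), computed pathwise
  from the values l x = lambda(x); the supremum of the empty set is taken to be 0.\<close>
definition lamseq :: "'e set \<Rightarrow> ('e set \<Rightarrow> 'e \<Rightarrow> 'e) \<Rightarrow> ('e \<Rightarrow> real) \<Rightarrow> nat \<Rightarrow> real" where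
  "lamseq E s l k = Sup (insert 0
     {Min ((\<lambda>j. l (xs j)) ` {0..k}) | xs.
        (\<forall>j\<in>{0..k}. xs j \<in> E) \<and>
        (\<forall>i\<in>{0..k}. \<forall>j\<in>{0..k}. i \<noteq> j \<longrightarrow> \<not> vequiv E s (xs i) (xs j))})"

text \<open>Circ k t is the point at counterclockwise arc length t (0 <= t < lambda) from a base
  point of the circle with perimeter Lam k (the paper's C_(k+1)); Seg s is the point at
  position s of the segment L.\<close>
datatype cpt = Circ nat real | Seg real

definition ell :: "(nat \<Rightarrow> real) \<Rightarrow> real" where
  "ell Lam = 1 - (\<Sum>k. Lam k)"

definition circle :: "(nat \<Rightarrow> real) \<Rightarrow> nat \<Rightarrow> cpt set" where
  "circle Lam k = {Circ k t | t. 0 < Lam k \<and> 0 \<le> t \<and> t < Lam k}"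

definition Lseg :: "(nat \<Rightarrow> real) \<Rightarrow> cpt set" where
  "Lseg Lam = (if 0 < ell Lam then {Seg s | s. 0 \<le> s \<and> s \<le> ell Lam} else {})"

definition Cspace :: "(nat \<Rightarrow> real) \<Rightarrow> cpt set" where
  "Cspace Lam = (\<Union>k. circle Lam k) \<union> Lseg Lam"

text \<open>Uniform measure on C of a set A (whose slices are Borel).\<close>
definition unifC :: "(nat \<Rightarrow> real) \<Rightarrow> cpt set \<Rightarrow> ennreal" where
  "unifC Lam A =
     (\<Sum>k. emeasure lborel ({t. Circ k t \<in> A} \<inter> {t. 0 < Lam k \<and> 0 \<le> t \<and> t < Lam k}))
     + emeasure lborel ({s. Seg s \<in> A} \<inter> {s. 0 < ell Lam \<and> 0 \<le> s \<and> s \<le> ell Lam})"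

definition admissible :: "cpt set \<Rightarrow> bool" where
  "admissible A \<longleftrightarrow> (\<forall>k. {t. Circ k t \<in> A} \<in> sets borel) \<and> {s. Seg s \<in> A} \<in> sets borel"

definition circdist :: "real \<Rightarrow> real \<Rightarrow> real" where
  "circdist l u = Inf {\<bar>a\<bar> | a. \<exists>m::int. u = a + of_int m * l}"

definition Dmet :: "(nat \<Rightarrow> real) \<Rightarrow> cpt \<Rightarrow> cpt \<Rightarrow> real" where
  "Dmet Lam p q = (case (p, q) of
       (Circ k s, Circ k' t) \<Rightarrow> (if k = k' then circdist (Lam k) (s - t) else 1)
     | (Seg s, Seg t) \<Rightarrow> (if s = t then 0 else 1)
     | _ \<Rightarrow> 1)"

definition dmet :: "'e set \<Rightarrow> ('e set \<Rightarrow> 'e \<Rightarrow> 'e) \<Rightarrow> ('e \<Rightarrow> real) \<Rightarrow> ('e \<Rightarrow> 'e \<Rightarrow> real)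
                    \<Rightarrow> 'e \<Rightarrow> 'e \<Rightarrow> real" where
  "dmet E s l Dl x y = (if vequiv E s x y then circdist (l x) (Dl x y) else 1)"

end

theory Submission
  imports Defs
begin

text \<open>Conditionally on (\<lambda>_k), two points X_x, X_y (x \<noteq> y) are independent and uniform on C,
  and the uniform law has no atoms: cutting C into countably many cells Q_i of mass at most 1/n
  gives P(X_x = X_y) \<le> \<Sum>_i E[U(Q_i)^2] \<le> 1/n \<Sum>_i E[U(Q_i)] \<le> 1/n, so x \<mapsto> X_x is a.s. injective.
  The isometry property then holds pointwise: for distinct points it is read off from the
  coupling of X with \<sigma>, and on the diagonal it needs \<Delta>(x,x) = 0, which follows from
  k_I(x,x) = 0.\<close>

lemma virtual_perm_permutes:
  "virtual_perm E s \<Longrightarrow> finite I \<Longrightarrow> I \<subseteq> E \<Longrightarrow> s I permutes I"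
  unfolding virtual_perm_def by blast

lemma virtual_perm_restrict:
  "virtual_perm E s \<Longrightarrow> finite J \<Longrightarrow> J \<subseteq> E \<Longrightarrow> I \<subseteq> J \<Longrightarrow> x \<in> I \<Longrightarrow>
     s I x = (s J ^^ (LEAST m. 1 \<le> m \<and> (s J ^^ m) x \<in> I)) x"
  unfolding virtual_perm_def by blast

lemma funpow_permutes_in: "p permutes I \<Longrightarrow> x \<in> I \<Longrightarrow> (p ^^ n) x \<in> I"
  by (induction n) (auto simp: permutes_in_image)

lemma virtual_perm_orbit_mono:
  assumes vp: "virtual_perm E s" and K: "finite K" "K \<subseteq> E" and JK: "J \<subseteq> K" and x: "x \<in> J"
  shows "\<exists>m. (s J ^^ n) x = (s K ^^ m) x"
proof (induction n)
  case 0
  show ?case by (rule exI[of _ 0]) simp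
next
  case (Suc n)
  then obtain m where m: "(s J ^^ n) x = (s K ^^ m) x" by blast
  have "(s J ^^ n) x \<in> J"
    using funpow_permutes_in virtual_perm_permutes[OF vp] K JK x finite_subset by (metis order_trans)
  then obtain m' where "s J ((s J ^^ n) x) = (s K ^^ m') ((s J ^^ n) x)"
    using virtual_perm_restrict[OF vp K JK] by blast
  then have "(s J ^^ Suc n) x = (s K ^^ (m' + m)) x" using m by (simp add: funpow_add)
  then show ?case by blast
qed

lemma virtual_perm_orbit_restrict:
  assumes vp: "virtual_perm E s" and K: "finite K" "K \<subseteq> E" and IK: "I \<subseteq> K"
  shows "x \<in> I \<Longrightarrow> (s K ^^ n) x \<in> I \<Longrightarrow> \<exists>j. (s K ^^ n) x = (s I ^^ j) x"
proof (induction n arbitrary: x rule: less_induct)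
  case (less n x)
  show ?case
  proof (cases "n = 0")
    case True
    then show ?thesis by (intro exI[of _ 0]) simp
  next
    case False
    define m where "m = (LEAST m. 1 \<le> m \<and> (s K ^^ m) x \<in> I)"
    have P: "1 \<le> n \<and> (s K ^^ n) x \<in> I" using False less.prems by simp
    have "m \<le> n" "1 \<le> m" unfolding m_def using P LeastI[of "\<lambda>m. 1 \<le> m \<and> (s K ^^ m) x \<in> I"]
      by (auto intro: Least_le)
    have sI: "s I x = (s K ^^ m) x" unfolding m_def using virtual_perm_restrict[OF vp K IK less.prems(1)] .
    have "s I x \<in> I"
      using virtual_perm_permutes[OF vp] K IK finite_subset less.prems(1) permutes_in_image by (metis order_trans)
    moreover have eq: "(s K ^^ n) x = (s K ^^ (n - m)) (s I x)"
      using sI \<open>m \<le> n\<close> by (metis funpow_add le_add_diff_inverse2 o_apply)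
    ultimately obtain j where "(s K ^^ (n - m)) (s I x) = (s I ^^ j) (s I x)"
      using less.IH[of "n - m" "s I x"] \<open>1 \<le> m\<close> \<open>m \<le> n\<close> less.prems(2) by auto
    then have "(s K ^^ n) x = (s I ^^ Suc j) x" using eq by (metis funpow_Suc_right o_apply)
    then show ?thesis by blast
  qed
qed

lemma vequiv_imp_orbit:
  assumes vp: "virtual_perm E s" and I: "finite I" "I \<subseteq> E" and "x \<in> I" "y \<in> I"
    and "vequiv E s x y"
  shows "\<exists>n. (s I ^^ n) x = y"
proof -
  obtain J n where J: "finite J" "J \<subseteq> E" "x \<in> J" "y \<in> J" and n: "(s J ^^ n) x = y"
    using \<open>vequiv E s x y\<close> unfolding vequiv_def by blast
  have K: "finite (I \<union> J)" "I \<union> J \<subseteq> E" using I J by auto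
  obtain m where m: "(s J ^^ n) x = (s (I \<union> J) ^^ m) x"
    using virtual_perm_orbit_mono[OF vp K, of J x n] J by auto
  then show ?thesis
    using virtual_perm_orbit_restrict[OF vp K, of I x m] \<open>x \<in> I\<close> \<open>y \<in> I\<close> n by auto
qed

lemma vequiv_refl: "x \<in> E \<Longrightarrow> vequiv E s x x"
  unfolding vequiv_def by (auto intro!: exI[of _ "{x}"] exI[of _ 0])

text \<open>The cycle of x in s I is all of I \<inter> vclass E s x, so 0 is the only exponent
  below its length returning x to itself.\<close>
lemma kI_refl:
  assumes vp: "virtual_perm E s" and I: "finite I" "I \<subseteq> E" and x: "x \<in> I"
  shows "kI E s I x x = 0"
  unfolding kI_def
proof (rule the_equality)
  have "x \<in> I \<inter> vclass E s x" using I x vequiv_refl[of x E s] unfolding vclass_def by auto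
  then show "0 < card (I \<inter> vclass E s x) \<and> (s I ^^ 0) x = x" using I by (auto simp: card_gt_0_iff)
next
  fix k assume k: "k < card (I \<inter> vclass E s x) \<and> (s I ^^ k) x = x"
  show "k = 0"
  proof (rule ccontr)
    assume "k \<noteq> 0"
    have "I \<inter> vclass E s x \<subseteq> (\<lambda>j. (s I ^^ j) x) ` {..<k}"
    proof
      fix y assume "y \<in> I \<inter> vclass E s x"
      then obtain n where n: "(s I ^^ n) x = y"
        using vequiv_imp_orbit[OF vp I x] unfolding vclass_def by auto
      have "(s I ^^ (n mod k)) x = y" using funpow_mod_eq[of k "s I" x n] k n by simp
      then show "y \<in> (\<lambda>j. (s I ^^ j) x) ` {..<k}" using \<open>k \<noteq> 0\<close> by force
    qed
    then have "card (I \<inter> vclass E s x) \<le> k"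
      using card_mono[OF finite_imageI] card_image_le[of "{..<k}"] by (metis card_lessThan finite_lessThan le_trans)
    then show False using k by simp
  qed
qed

lemma eventually_finsets_top: "eventually (\<lambda>I. finite I \<and> S \<subseteq> I \<and> I \<subseteq> E) (finsets_top E S)"
  unfolding finsets_top_def by (rule eventually_INF1[of 0]) (auto simp: eventually_principal)

lemma finsets_top_neq_bot:
  assumes "infinite E" "finite S" "S \<subseteq> E"
  shows "finsets_top E S \<noteq> bot"
proof -
  have "{I. finite I \<and> S \<subseteq> I \<and> I \<subseteq> E \<and> N \<le> card I} \<noteq> {}" for N
  proof -
    obtain B where B: "finite B" "card B = N" "B \<subseteq> E"
      using infinite_arbitrarily_large[OF \<open>infinite E\<close>] by blast
    then have "N \<le> card (S \<union> B)" using \<open>finite S\<close> by (metis card_mono finite_UnI sup_ge2)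
    then show ?thesis using B assms by blast
  qed
  moreover have "\<exists>k. principal {I. finite I \<and> S \<subseteq> I \<and> I \<subseteq> E \<and> k \<le> card I}
      \<le> principal {I. finite I \<and> S \<subseteq> I \<and> I \<subseteq> E \<and> i \<le> card I}
       \<sqinter> principal {I. finite I \<and> S \<subseteq> I \<and> I \<subseteq> E \<and> j \<le> card I}" for i j :: nat
    by (intro exI[of _ "max i j"]) (auto simp: inf_principal)
  ultimately show ?thesis
    unfolding finsets_top_def by (subst INF_filter_bot_base) (auto simp: principal_eq_bot_iff)
qed

lemma Delta_refl_AE:
  fixes M :: "'w measure" and \<sigma> :: "'w \<Rightarrow> 'e set \<Rightarrow> 'e \<Rightarrow> 'e"
  assumes vp: "\<forall>\<omega>\<in>space M. virtual_perm E (\<sigma> \<omega>)"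
    and "infinite E" and x: "x \<in> E"
    and meas: "Delta \<in> borel_measurable M"
    and lim: "((\<lambda>I. \<integral>\<^sup>+\<omega>. ennreal (indicator {\<omega>. vequiv E (\<sigma> \<omega>) x x} \<omega> *
              \<bar>real (kI E (\<sigma> \<omega>) I x x) / real (card I) - Delta \<omega>\<bar>) \<partial>M) \<longlongrightarrow> 0)
            (finsets_top E {x, x})"
  shows "AE \<omega> in M. Delta \<omega> = 0"
proof -
  let ?c = "\<integral>\<^sup>+\<omega>. ennreal \<bar>Delta \<omega>\<bar> \<partial>M"
  have "eventually (\<lambda>I. (\<integral>\<^sup>+\<omega>. ennreal (indicator {\<omega>. vequiv E (\<sigma> \<omega>) x x} \<omega> *
          \<bar>real (kI E (\<sigma> \<omega>) I x x) / real (card I) - Delta \<omega>\<bar>) \<partial>M) = ?c) (finsets_top E {x, x})"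
    using eventually_finsets_top[of "{x, x}" E]
  proof eventually_elim
    case (elim I)
    then have "kI E (\<sigma> \<omega>) I x x = 0" if "\<omega> \<in> space M" for \<omega>
      using kI_refl[of E "\<sigma> \<omega>" I x] vp that elim by auto
    then show ?case
      using vequiv_refl[OF x] by (intro nn_integral_cong) simp
  qed
  then have "((\<lambda>_. ?c) \<longlongrightarrow> 0) (finsets_top E {x, x})"
    using lim tendsto_cong by fastforce
  then have "?c = 0"
    using finsets_top_neq_bot[OF \<open>infinite E\<close>, of "{x, x}"] x tendsto_const_iff by auto
  then have "AE \<omega> in M. ennreal \<bar>Delta \<omega>\<bar> = 0"
    using nn_integral_0_iff_AE[of "\<lambda>\<omega>. ennreal \<bar>Delta \<omega>\<bar>" M] meas by simp
  then show ?thesis by eventually_elim simp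
qed

text \<open>Unlike nn_integral_cmult, this needs no measurability of f: scaling by c maps simple
  minorants of f to simple minorants of c * f.\<close>
lemma nn_integral_cmult_le:
  fixes f :: "'a \<Rightarrow> ennreal"
  shows "c * integral\<^sup>N M f \<le> (\<integral>\<^sup>+x. c * f x \<partial>M)"
  unfolding nn_integral_def SUP_mult_left_ennreal
proof (rule SUP_least)
  fix g assume g: "g \<in> {g. simple_function M g \<and> g \<le> f}"
  then have "c * integral\<^sup>S M g = integral\<^sup>S M (\<lambda>x. c * g x)" by simp
  also have "\<dots> \<le> (SUP g \<in> {g. simple_function M g \<and> g \<le> (\<lambda>x. c * f x)}. integral\<^sup>S M g)"
    using g by (intro SUP_upper) (auto simp: le_fun_def intro: mult_left_mono)
  finally show "c * integral\<^sup>S M g \<le> (SUP g \<in> {g. simple_function M g \<and> g \<le> (\<lambda>x. c * f x)}. integral\<^sup>S M g)" .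
qed

text \<open>U \<omega> A plays the conditional probability, given \<omega>, of X \<in> A and of Y \<in> A, with X and Y
  conditionally independent.\<close>
lemma emeasure_same_cell_le:
  fixes X Y :: "'w \<Rightarrow> 'b" and U :: "'w \<Rightarrow> 'b set \<Rightarrow> ennreal" and Q :: "nat \<Rightarrow> 'b set"
  assumes "prob_space M" and "n > 0"
    and meas: "\<And>i. {\<omega>\<in>space M. X \<omega> \<in> Q i} \<in> sets M" "\<And>i. {\<omega>\<in>space M. Y \<omega> \<in> Q i} \<in> sets M"
    and marginal: "\<And>i. emeasure M {\<omega>\<in>space M. X \<omega> \<in> Q i} = (\<integral>\<^sup>+\<omega>. U \<omega> (Q i) \<partial>M)"
    and joint: "\<And>i. emeasure M {\<omega>\<in>space M. X \<omega> \<in> Q i \<and> Y \<omega> \<in> Q i}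
      = (\<integral>\<^sup>+\<omega>. U \<omega> (Q i) * U \<omega> (Q i) \<partial>M)"
    and disj: "disjoint_family Q"
    and small: "\<And>\<omega> i. U \<omega> (Q i) \<le> ennreal (1 / real n)"
  shows "of_nat n * emeasure M (\<Union>i. {\<omega>\<in>space M. X \<omega> \<in> Q i \<and> Y \<omega> \<in> Q i}) \<le> 1"
proof -
  interpret prob_space M by fact
  have both: "{\<omega>\<in>space M. X \<omega> \<in> Q i \<and> Y \<omega> \<in> Q i} \<in> sets M" for i
    by (intro sets.sets_Collect_conj meas)
  have nU: "of_nat n * U \<omega> (Q i) \<le> 1" for \<omega> i
  proof -
    have "of_nat n * U \<omega> (Q i) \<le> ennreal (real n) * ennreal (1 / real n)"
      unfolding ennreal_of_nat_eq_real_of_nat by (rule mult_left_mono[OF small]) simp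
    also have "\<dots> = 1" using \<open>n > 0\<close> by (simp flip: ennreal_mult)
    finally show ?thesis .
  qed
  have "emeasure M (\<Union>i. {\<omega>\<in>space M. X \<omega> \<in> Q i \<and> Y \<omega> \<in> Q i})
      \<le> (\<Sum>i. \<integral>\<^sup>+\<omega>. U \<omega> (Q i) * U \<omega> (Q i) \<partial>M)"
    unfolding joint[symmetric] by (rule emeasure_subadditive_countably) (use both in auto)
  then have "of_nat n * emeasure M (\<Union>i. {\<omega>\<in>space M. X \<omega> \<in> Q i \<and> Y \<omega> \<in> Q i})
      \<le> of_nat n * (\<Sum>i. \<integral>\<^sup>+\<omega>. U \<omega> (Q i) * U \<omega> (Q i) \<partial>M)"
    by (rule mult_left_mono) simp
  also have "\<dots> \<le> (\<Sum>i. \<integral>\<^sup>+\<omega>. of_nat n * (U \<omega> (Q i) * U \<omega> (Q i)) \<partial>M)"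
    unfolding ennreal_suminf_cmult[symmetric] by (intro suminf_le nn_integral_cmult_le) auto
  also have "\<dots> \<le> (\<Sum>i. \<integral>\<^sup>+\<omega>. U \<omega> (Q i) \<partial>M)"
    using mult_right_mono[OF nU] by (intro suminf_le nn_integral_mono) (auto simp: mult.assoc)
  also have "\<dots> = emeasure M (\<Union>i. {\<omega>\<in>space M. X \<omega> \<in> Q i})"
    unfolding marginal[symmetric]
    by (rule suminf_emeasure) (use meas(1) disj in \<open>auto simp: disjoint_family_on_def\<close>)
  also have "\<dots> \<le> 1" by (rule emeasure_le_1)
  finally show ?thesis .
qed

lemma AE_neq_of_fine_partitions:
  fixes X Y :: "'w \<Rightarrow> 'b" and U :: "'w \<Rightarrow> 'b set \<Rightarrow> ennreal" and adm :: "'b set \<Rightarrow> bool"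
  assumes P: "prob_space M"
    and meas: "\<And>A. adm A \<Longrightarrow> {\<omega>\<in>space M. X \<omega> \<in> A} \<in> sets M"
      "\<And>A. adm A \<Longrightarrow> {\<omega>\<in>space M. Y \<omega> \<in> A} \<in> sets M"
    and marginal: "\<And>A. adm A \<Longrightarrow> emeasure M {\<omega>\<in>space M. X \<omega> \<in> A} = (\<integral>\<^sup>+\<omega>. U \<omega> A \<partial>M)"
    and joint: "\<And>A. adm A \<Longrightarrow>
      emeasure M {\<omega>\<in>space M. X \<omega> \<in> A \<and> Y \<omega> \<in> A} = (\<integral>\<^sup>+\<omega>. U \<omega> A * U \<omega> A \<partial>M)"
    and partitions: "\<And>n. n > 0 \<Longrightarrow> \<exists>Q :: nat \<Rightarrow> 'b set. disjoint_family Q \<and> (\<Union>i. Q i) = UNIV \<and>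
        (\<forall>i. adm (Q i)) \<and> (\<forall>\<omega> i. U \<omega> (Q i) \<le> ennreal (1 / real n))"
  shows "AE \<omega> in M. X \<omega> \<noteq> Y \<omega>"
proof -
  interpret prob_space M by (fact P)
  have "\<forall>n. \<exists>Q :: nat \<Rightarrow> 'b set. disjoint_family Q \<and> (\<Union>i. Q i) = UNIV \<and>
      (\<forall>i. adm (Q i)) \<and> (\<forall>\<omega> i. U \<omega> (Q i) \<le> ennreal (1 / real (Suc n)))"
    using partitions by blast
  from choice[OF this] obtain Q :: "nat \<Rightarrow> nat \<Rightarrow> 'b set"
    where "\<forall>n. disjoint_family (Q n) \<and> (\<Union>i. Q n i) = UNIV \<and> (\<forall>i. adm (Q n i)) \<and> (\<forall>\<omega> i. U \<omega> (Q n i) \<le> ennreal (1 / real (Suc n)))"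
    by blast
  then have Q: "\<And>n. disjoint_family (Q n)" "\<And>n. (\<Union>i. Q n i) = UNIV" "\<And>n i. adm (Q n i)"
      "\<And>n \<omega> i. U \<omega> (Q n i) \<le> ennreal (1 / real (Suc n))"
    by blast+
  define same_cell where "same_cell n = (\<Union>i. {\<omega>\<in>space M. X \<omega> \<in> Q n i \<and> Y \<omega> \<in> Q n i})" for n
  define N where "N = (\<Inter>n. same_cell n)"
  have "same_cell n \<in> sets M" for n
    using meas Q(3) unfolding same_cell_def by (auto intro!: sets.sets_Collect_conj)
  then have N: "N \<in> sets M" unfolding N_def by auto
  have "of_nat (Suc n) * emeasure M N \<le> 1" for n
  proof -
    have "of_nat (Suc n) * emeasure M N \<le> of_nat (Suc n) * emeasure M (same_cell n)"
      using \<open>same_cell n \<in> sets M\<close> by (intro mult_left_mono emeasure_mono) (auto simp: N_def)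
    also have "\<dots> \<le> 1"
      unfolding same_cell_def using Q
      by (intro emeasure_same_cell_le[OF P]) (auto intro: meas marginal joint)
    finally show ?thesis .
  qed
  then have "ennreal (real (Suc n) * measure M N) \<le> ennreal 1" for n
    by (simp add: emeasure_eq_measure ennreal_of_nat_eq_real_of_nat ennreal_mult del: of_nat_Suc)
  then have "real (Suc n) * measure M N \<le> 1" for n
    by (simp add: ennreal_le_iff2 del: of_nat_Suc)
  then have "measure M N \<le> 1 / real (Suc n)" for n
    by (simp add: divide_simps mult.commute del: of_nat_Suc)
  then have "measure M N = 0"
    by (metis measure_nonneg nat_approx_posE not_le order.not_eq_order_implies_strict)
  moreover have "{\<omega>\<in>space M. \<not> X \<omega> \<noteq> Y \<omega>} \<subseteq> N"
  proof (intro subsetI)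
    fix \<omega> assume \<omega>: "\<omega> \<in> {\<omega>\<in>space M. \<not> X \<omega> \<noteq> Y \<omega>}"
    have "\<exists>i. X \<omega> \<in> Q n i" for n using Q(2)[of n] by (metis UNIV_I UN_iff)
    then show "\<omega> \<in> N" using \<omega> unfolding N_def same_cell_def by auto
  qed
  ultimately show ?thesis using N by (intro AE_I) (auto simp: emeasure_eq_measure)
qed

fun cell_index :: "nat \<Rightarrow> cpt \<Rightarrow> (nat \<times> int) + int" where
  "cell_index n (Circ k t) = Inl (k, \<lfloor>t * n\<rfloor>)"
| "cell_index n (Seg t) = Inr \<lfloor>t * n\<rfloor>"

lemma floor_mult_eq_iff:
  "n > 0 \<Longrightarrow> \<lfloor>t * real n\<rfloor> = j \<longleftrightarrow> t \<in> {of_int j / real n ..< (of_int j + 1) / real n}"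
  by (auto simp: floor_eq_iff field_simps)

lemma emeasure_floor_fibre_le:
  assumes "n > 0" shows "emeasure lborel ({t. \<lfloor>t * real n\<rfloor> = j} \<inter> S) \<le> ennreal (1 / real n)"
proof -
  have "emeasure lborel ({t. \<lfloor>t * real n\<rfloor> = j} \<inter> S)
      \<le> emeasure lborel {of_int j / real n ..< (of_int j + 1) / real n}"
    using floor_mult_eq_iff[OF assms] by (intro emeasure_mono) auto
  also have "\<dots> = ennreal (1 / real n)" using assms by (simp add: field_simps diff_divide_distrib)
  finally show ?thesis .
qed

lemma admissible_cell: "n > 0 \<Longrightarrow> admissible {p. cell_index n p = c}"
  unfolding admissible_def using floor_mult_eq_iff by (cases c) auto

lemma unifC_cell_le:
  assumes "n > 0" shows "unifC L {p. cell_index n p = c} \<le> ennreal (1 / real n)"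
proof (cases c)
  case (Inl a)
  obtain k j where a: "a = (k, j)" by (cases a)
  let ?f = "\<lambda>k'. emeasure lborel ({t. Circ k' t \<in> {p. cell_index n p = c}} \<inter> {t. 0 < L k' \<and> 0 \<le> t \<and> t < L k'})"
  have "{t. Circ k' t \<in> {p. cell_index n p = c}} = (if k' = k then {t. \<lfloor>t * real n\<rfloor> = j} else {})" for k'
    by (auto simp: Inl a)
  then have "suminf ?f = ?f k" by (subst suminf_finite[of "{k}"]) auto
  also have "\<dots> \<le> ennreal (1 / real n)" by (simp add: Inl a emeasure_floor_fibre_le[OF assms])
  finally show ?thesis by (simp add: unifC_def Inl)
next
  case (Inr j)
  then show ?thesis by (simp add: unifC_def emeasure_floor_fibre_le[OF assms])
qed

lemma cpt_fine_partition:
  assumes "n > 0"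
  shows "\<exists>Q :: nat \<Rightarrow> cpt set. disjoint_family Q \<and> (\<Union>i. Q i) = UNIV \<and>
           (\<forall>i. admissible (Q i)) \<and> (\<forall>L i. unifC L (Q i) \<le> ennreal (1 / real n))"
proof (intro exI conjI allI)
  define Q where "Q i = {p. to_nat (cell_index n p) = i}" for i
  have Q_cell: "Q i = {} \<or> (\<exists>c. Q i = {p. cell_index n p = c})" for i
  proof (cases "\<exists>c :: (nat \<times> int) + int. to_nat c = i")
    case True
    then obtain c :: "(nat \<times> int) + int" where "i = to_nat c" by blast
    then show ?thesis unfolding Q_def by auto
  qed (auto simp: Q_def)
  show "disjoint_family Q" by (auto simp: Q_def disjoint_family_on_def)
  show "(\<Union>i. Q i) = UNIV" by (auto simp: Q_def)
  show "admissible (Q i)" for i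
    using Q_cell[of i] admissible_cell[OF assms] by (auto simp: admissible_def)
  show "unifC L (Q i) \<le> ennreal (1 / real n)" for L i
    using Q_cell[of i] unifC_cell_le[OF assms] by (auto simp: unifC_def)
qed

lemma AE_distinct_of_cond_iid_uniform:
  fixes M :: "'w measure" and X :: "'e \<Rightarrow> 'w \<Rightarrow> cpt" and Lam :: "'w \<Rightarrow> nat \<Rightarrow> real"
  assumes P: "prob_space M"
    and X_meas: "\<forall>x\<in>E. \<forall>A. admissible A \<longrightarrow> {\<omega>\<in>space M. X x \<omega> \<in> A} \<in> sets M"
    and X_cond_iid: "\<forall>F A B. finite F \<and> F \<subseteq> E \<and> (\<forall>x\<in>F. admissible (A x))
          \<and> B \<in> sets (\<Pi>\<^sub>M k\<in>(UNIV::nat set). (borel :: real measure)) \<longrightarrow>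
        emeasure M {\<omega>\<in>space M. Lam \<omega> \<in> B \<and> (\<forall>x\<in>F. X x \<omega> \<in> A x)}
          = (\<integral>\<^sup>+\<omega>. indicator {\<omega>. Lam \<omega> \<in> B} \<omega> * (\<Prod>x\<in>F. unifC (Lam \<omega>) (A x)) \<partial>M)"
    and "x \<in> E" "y \<in> E" "x \<noteq> y"
  shows "AE \<omega> in M. X x \<omega> \<noteq> X y \<omega>"
proof (rule AE_neq_of_fine_partitions[OF P, where U = "\<lambda>\<omega>. unifC (Lam \<omega>)" and adm = admissible])
  have UNIV_sets: "UNIV \<in> sets (\<Pi>\<^sub>M k\<in>(UNIV::nat set). (borel :: real measure))"
    using sets.top[of "\<Pi>\<^sub>M k\<in>(UNIV::nat set). (borel :: real measure)"] by (simp add: space_PiM)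
  show "emeasure M {\<omega>\<in>space M. X x \<omega> \<in> A} = (\<integral>\<^sup>+\<omega>. unifC (Lam \<omega>) A \<partial>M)" if "admissible A" for A
    using X_cond_iid[rule_format, of "{x}" "\<lambda>_. A" UNIV] \<open>x \<in> E\<close> that UNIV_sets by simp
  show "emeasure M {\<omega>\<in>space M. X x \<omega> \<in> A \<and> X y \<omega> \<in> A}
      = (\<integral>\<^sup>+\<omega>. unifC (Lam \<omega>) A * unifC (Lam \<omega>) A \<partial>M)" if "admissible A" for A
    using X_cond_iid[rule_format, of "{x, y}" "\<lambda>_. A" UNIV] assms(4-6) that UNIV_sets by simp
  show "{\<omega>\<in>space M. X x \<omega> \<in> A} \<in> sets M" "{\<omega>\<in>space M. X y \<omega> \<in> A} \<in> sets M"
    if "admissible A" for A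
    using X_meas \<open>x \<in> E\<close> \<open>y \<in> E\<close> that by blast+
  show "\<exists>Q :: nat \<Rightarrow> cpt set. disjoint_family Q \<and> (\<Union>i. Q i) = UNIV \<and>
      (\<forall>i. admissible (Q i)) \<and> (\<forall>\<omega> i. unifC (Lam \<omega>) (Q i) \<le> ennreal (1 / real n))" if n: "n > 0" for n
  proof -
    obtain Q :: "nat \<Rightarrow> cpt set" where "disjoint_family Q" "(\<Union>i. Q i) = UNIV" "\<forall>i. admissible (Q i)"
        "\<forall>L i. unifC L (Q i) \<le> ennreal (1 / real n)"
      using cpt_fine_partition[OF n] by blast
    then show ?thesis by (intro exI[of _ Q]) simp
  qed
qed

lemma circdist_zero [simp]: "circdist l 0 = 0"
  unfolding circdist_def by (rule cInf_eq_minimum) (auto intro!: exI[of _ 0])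

lemma circdist_minus [simp]: "circdist l (- u) = circdist l u"
proof -
  have "{a. \<exists>m::int. - u = a + of_int m * l} = uminus ` {a. \<exists>m::int. u = a + of_int m * l}"
  proof (intro equalityI subsetI)
    fix a assume "a \<in> {a. \<exists>m::int. - u = a + of_int m * l}"
    then obtain m :: int where "- u = a + of_int m * l" by blast
    then have "- a \<in> {a. \<exists>m::int. u = a + of_int m * l}" by (intro CollectI exI[of _ "- m"]) simp
    then show "a \<in> uminus ` {a. \<exists>m::int. u = a + of_int m * l}" by (metis add.inverse_inverse image_eqI)
  next
    fix a assume "a \<in> uminus ` {a. \<exists>m::int. u = a + of_int m * l}"
    then obtain b m where "a = - b" "u = b + of_int m * l" by blast
    then show "a \<in> {a. \<exists>m::int. - u = a + of_int m * l}" by (intro CollectI exI[of _ "- m"]) simp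
  qed
  then show ?thesis unfolding circdist_def by (simp add: setcompr_eq_image image_image)
qed

lemma circdist_add_multiple [simp]: "circdist l (u + of_int m * l) = circdist l u"
proof -
  have "(\<exists>m'::int. u + of_int m * l = a + of_int m' * l) \<longleftrightarrow> (\<exists>m'::int. u = a + of_int m' * l)" for a
  proof
    assume "\<exists>m'::int. u + of_int m * l = a + of_int m' * l"
    then obtain m' :: int where "u + of_int m * l = a + of_int m' * l" by blast
    then show "\<exists>m'::int. u = a + of_int m' * l" by (intro exI[of _ "m' - m"]) (simp add: algebra_simps)
  next
    assume "\<exists>m'::int. u = a + of_int m' * l"
    then obtain m' :: int where "u = a + of_int m' * l" by blast
    then show "\<exists>m'::int. u + of_int m * l = a + of_int m' * l" by (intro exI[of _ "m' + m"]) (simp add: algebra_simps)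
  qed
  then show ?thesis by (simp add: circdist_def)
qed

lemma Circ_in_Cspace_imp_circle: "Circ k t \<in> Cspace L \<Longrightarrow> Circ k t \<in> circle L k"
  unfolding Cspace_def circle_def Lseg_def by (auto split: if_splits)

lemma Dmet_self [simp]: "Dmet L p p = 0"
  by (cases p) (auto simp: Dmet_def)

lemma Dmet_off_common_circle:
  assumes "p \<in> Cspace L" "q \<in> Cspace L" "p \<noteq> q" "\<not> (\<exists>k. p \<in> circle L k \<and> q \<in> circle L k)"
  shows "Dmet L p q = 1"
proof (cases p; cases q)
  fix k a k' b assume "p = Circ k a" "q = Circ k' b"
  then have "k \<noteq> k'" using assms Circ_in_Cspace_imp_circle by metis
  then show ?thesis using \<open>p = Circ k a\<close> \<open>q = Circ k' b\<close> by (simp add: Dmet_def)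
qed (use \<open>p \<noteq> q\<close> in \<open>auto simp: Dmet_def\<close>)

lemma Dmet_eq_dmet:
  fixes Y :: "'e \<Rightarrow> cpt"
  assumes inj: "x \<noteq> y \<Longrightarrow> Y x \<noteq> Y y"
    and D_refl: "D x x = 0" and "x \<in> E"
    and in_C: "Y x \<in> Cspace L" "Y y \<in> Cspace L"
    and equiv: "x \<noteq> y \<Longrightarrow> vequiv E s x y \<longleftrightarrow> (\<exists>k. Y x \<in> circle L k \<and> Y y \<in> circle L k)"
    and cycle_length: "\<And>k. x \<noteq> y \<Longrightarrow> Y x \<in> circle L k \<Longrightarrow> Y y \<in> circle L k \<Longrightarrow> l x = L k"
    and delta: "x \<noteq> y \<Longrightarrow> vequiv E s x y \<Longrightarrow>
        \<exists>k a b. Y x = Circ k a \<and> Y y = Circ k b \<and> (\<exists>m::int. D x y = (b - a) + of_int m * l x)"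
  shows "Dmet L (Y x) (Y y) = dmet E s l D x y"
proof -
  consider "x = y" | "x \<noteq> y" "vequiv E s x y" | "x \<noteq> y" "\<not> vequiv E s x y" by blast
  then show ?thesis
  proof cases
    case 1
    then show ?thesis using vequiv_refl[OF \<open>x \<in> E\<close>] D_refl by (simp add: dmet_def)
  next
    case 2
    then obtain k a b and m :: int where k: "Y x = Circ k a" "Y y = Circ k b"
      and m: "D x y = (b - a) + of_int m * l x"
      using delta by blast
    have "l x = L k" using 2 k in_C cycle_length Circ_in_Cspace_imp_circle by metis
    then have "dmet E s l D x y = circdist (L k) (- (a - b))" using 2 m by (simp add: dmet_def)
    then show ?thesis using k by (simp add: Dmet_def del: minus_diff_eq)
  next
    case 3
    then have "\<not> (\<exists>k. Y x \<in> circle L k \<and> Y y \<in> circle L k)" using equiv by blast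
    then show ?thesis using Dmet_off_common_circle[OF in_C inj] 3 by (simp add: dmet_def)
  qed
qed

theorem proposition4p2:
  fixes M :: "'w measure"
    and E :: "'e set"
    and \<sigma> :: "'w \<Rightarrow> 'e set \<Rightarrow> 'e \<Rightarrow> 'e"
    and lam :: "'e \<Rightarrow> 'w \<Rightarrow> real"
    and Delta :: "'e \<Rightarrow> 'e \<Rightarrow> 'w \<Rightarrow> real"
    and X :: "'e \<Rightarrow> 'w \<Rightarrow> cpt"
  defines "Lam \<equiv> (\<lambda>\<omega>. lamseq E (\<sigma> \<omega>) (\<lambda>x. lam x \<omega>))"
  assumes P: "prob_space M"
    and cE: "countable E" and iE: "infinite E"
    \<comment> \<open>sigma is a random virtual permutation\<close>
    and vp: "\<forall>\<omega>\<in>space M. virtual_perm E (\<sigma> \<omega>)"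
    and meas_sigma: "\<forall>J p. finite J \<and> J \<subseteq> E \<longrightarrow> {\<omega>\<in>space M. \<sigma> \<omega> J = p} \<in> sets M"
    \<comment> \<open>central law\<close>
    and central: "\<forall>J p \<tau>. finite J \<and> J \<subseteq> E \<and> \<tau> permutes J \<longrightarrow>
        measure M {\<omega>\<in>space M. \<sigma> \<omega> J = \<tau> \<circ> p \<circ> inv \<tau>} = measure M {\<omega>\<in>space M. \<sigma> \<omega> J = p}"
    \<comment> \<open>lambda(x) is the L1 limit of |I \<inter> C(x)|/|I|\<close>
    and lam_meas: "\<forall>x\<in>E. lam x \<in> borel_measurable M"
    and lam_lim: "\<forall>x\<in>E. ((\<lambda>I. \<integral>\<^sup>+\<omega>. ennreal \<bar>real (card (I \<inter> vclass E (\<sigma> \<omega>) x)) / real (card I)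
                                      - lam x \<omega>\<bar> \<partial>M) \<longlongrightarrow> 0) (finsets_top E {})"
    \<comment> \<open>Delta(x,y) is the L1 limit of k_I(x,y)/|I| on the event x ~ y\<close>
    and Delta_meas: "\<forall>x\<in>E. \<forall>y\<in>E. Delta x y \<in> borel_measurable M"
    and Delta_lim: "\<forall>x\<in>E. \<forall>y\<in>E. ((\<lambda>I. \<integral>\<^sup>+\<omega>. ennreal (indicator {\<omega>. vequiv E (\<sigma> \<omega>) x y} \<omega> *
              \<bar>real (kI E (\<sigma> \<omega>) I x y) / real (card I) - Delta x y \<omega>\<bar>) \<partial>M) \<longlongrightarrow> 0)
            (finsets_top E {x, y})"
    \<comment> \<open>the X_x are random variables in C, conditionally on (lambda_k) i.i.d. uniform on C\<close>
    and X_meas: "\<forall>x\<in>E. \<forall>A. admissible A \<longrightarrow> {\<omega>\<in>space M. X x \<omega> \<in> A} \<in> sets M"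
    and X_in_C: "AE \<omega> in M. \<forall>x\<in>E. X x \<omega> \<in> Cspace (Lam \<omega>)"
    and X_cond_iid: "\<forall>F A B. finite F \<and> F \<subseteq> E \<and> (\<forall>x\<in>F. admissible (A x))
          \<and> B \<in> sets (\<Pi>\<^sub>M k\<in>(UNIV::nat set). (borel :: real measure)) \<longrightarrow>
        emeasure M {\<omega>\<in>space M. Lam \<omega> \<in> B \<and> (\<forall>x\<in>F. X x \<omega> \<in> A x)}
          = (\<integral>\<^sup>+\<omega>. indicator {\<omega>. Lam \<omega> \<in> B} \<omega> * (\<Prod>x\<in>F. unifC (Lam \<omega>) (A x)) \<partial>M)"
    \<comment> \<open>coupling with sigma\<close>
    and X_fixed: "AE \<omega> in M. \<forall>x\<in>E. (X x \<omega> \<in> Lseg (Lam \<omega>) \<longleftrightarrow> vfixed E (\<sigma> \<omega>) x)"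
    and X_equiv: "AE \<omega> in M. \<forall>x\<in>E. \<forall>y\<in>E. x \<noteq> y \<longrightarrow>
        (vequiv E (\<sigma> \<omega>) x y \<longleftrightarrow> (\<exists>k. X x \<omega> \<in> circle (Lam \<omega>) k \<and> X y \<omega> \<in> circle (Lam \<omega>) k))
        \<and> (\<forall>k. X x \<omega> \<in> circle (Lam \<omega>) k \<and> X y \<omega> \<in> circle (Lam \<omega>) k \<longrightarrow>
               lam x \<omega> = Lam \<omega> k \<and> lam y \<omega> = Lam \<omega> k)"
    and X_delta: "AE \<omega> in M. \<forall>x\<in>E. \<forall>y\<in>E. x \<noteq> y \<and> vequiv E (\<sigma> \<omega>) x y \<longrightarrow>
        (\<exists>k s t. X x \<omega> = Circ k s \<and> X y \<omega> = Circ k t \<and>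
           (\<exists>m::int. Delta x y \<omega> = (t - s) + of_int m * lam x \<omega>))"
  shows "AE \<omega> in M. bij_betw (\<lambda>x. X x \<omega>) E ((\<lambda>x. X x \<omega>) ` E) \<and>
           (\<forall>x\<in>E. \<forall>y\<in>E. Dmet (Lam \<omega>) (X x \<omega>) (X y \<omega>)
                         = dmet E (\<sigma> \<omega>) (\<lambda>z. lam z \<omega>) (\<lambda>z w. Delta z w \<omega>) x y)"
proof -
  interpret prob_space M by (fact P)
  have distinct: "AE \<omega> in M. \<forall>x\<in>E. \<forall>y\<in>E. x \<noteq> y \<longrightarrow> X x \<omega> \<noteq> X y \<omega>"
    unfolding AE_ball_countable[OF cE]
  proof (intro ballI)
    fix x y assume "x \<in> E" "y \<in> E"
    show "AE \<omega> in M. x \<noteq> y \<longrightarrow> X x \<omega> \<noteq> X y \<omega>"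
    proof (cases "x = y")
      case False
      then show ?thesis
        using AE_distinct_of_cond_iid_uniform[OF P X_meas X_cond_iid \<open>x \<in> E\<close> \<open>y \<in> E\<close>] by simp
    qed simp
  qed
  have Delta_refl: "AE \<omega> in M. \<forall>x\<in>E. Delta x x \<omega> = 0"
    unfolding AE_ball_countable[OF cE] using Delta_refl_AE[OF vp iE] Delta_meas Delta_lim by blast
  show ?thesis using distinct Delta_refl X_in_C X_equiv X_delta
  proof eventually_elim
    case (elim \<omega>)
    then have "inj_on (\<lambda>x. X x \<omega>) E" by (auto simp: inj_on_def)
    moreover have "Dmet (Lam \<omega>) (X x \<omega>) (X y \<omega>) = dmet E (\<sigma> \<omega>) (\<lambda>z. lam z \<omega>) (\<lambda>z w. Delta z w \<omega>) x y"
      if "x \<in> E" "y \<in> E" for x y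
      by (rule Dmet_eq_dmet) (use elim that in \<open>simp_all\<close>)
    ultimately show ?case by (simp add: bij_betw_def)
  qed
qed

end
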